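(* Let $A=\{a_1,\dots,a_k\}$ be a finite set of options and let $u_1,u_2:A\to\mathbb{R}$ be arbitrary. In the two-player Price \& Choose game defined in the context, (i) every subgame-perfect Nash equilibrium $\sigma=(\sigma_1,\sigma_2)$ has an efficient outcome, i.e. $\sigma_2(\sigma_1)\in\arg\max_{a\in A}\,(u_1(a)+u_2(a))$; and (ii) for every efficient option $a\in A$ there exists a subgame-perfect Nash equilibrium $\sigma$ with $\sigma_2(\sigma_1)=a$. (In particular, a subgame-perfect Nash equilibrium exists.)
   Context: Two players with quasi-linear utilities: if option $a\in A$ is selected and player $i$ receives monetary transfer $t_i$, player $i$'s utility is $u_i(a)+t_i$. Let $P=\{p\in\mathbb{R}^k:\sum_{j=1}^k p_j=0\}$. The Price \& Choose (P\&C) game: first player 1 chooses a price vector $p\in P$; then player 2, having observed $p$, chooses an option $a_j\in A$ and pays $p_j$ to player 1. Payoffs are $g_1(p,a_j)=u_1(a_j)+p_j$ and $g_2(p,a_j)=u_2(a_j)-p_j$. A (pure) strategy profile is $\sigma=(\sigma_1,\sigma_2)$ with $\sigma_1\in P$ and $\sigma_2:P\to A$. It is a subgame-perfect Nash equilibrium if for every $p\in P$, $\sigma_2(p)\in\arg\max_{a\in A}g_2(p,a)$, and $g_1(\sigma_1,\sigma_2(\sigma_1))\ge g_1(p,\sigma_2(p))$ for all $p\in P$. Its outcome is $\sigma_2(\sigma_1)$. An option $a$ is efficient if $u_1(a)+u_2(a)=\max_{b\in A}(u_1(b)+u_2(b))$. *)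

theory Defs
  imports Complex_Main
begin

text \<open>Options form a finite type 'a (A = UNIV). A price vector is a function p :: 'a => real
  indexed by options; P = price vectors summing to zero.\<close>

definition price_vectors :: "('a::finite \<Rightarrow> real) set" where
  "price_vectors = {p. (\<Sum>a\<in>UNIV. p a) = 0}"

definition g1 :: "('a \<Rightarrow> real) \<Rightarrow> ('a \<Rightarrow> real) \<Rightarrow> 'a \<Rightarrow> real" where
  "g1 u1 p a = u1 a + p a"

definition g2 :: "('a \<Rightarrow> real) \<Rightarrow> ('a \<Rightarrow> real) \<Rightarrow> 'a \<Rightarrow> real" where
  "g2 u2 p a = u2 a - p a"

definition is_SPNE ::
  "('a::finite \<Rightarrow> real) \<Rightarrow> ('a \<Rightarrow> real) \<Rightarrow> ('a \<Rightarrow> real) \<Rightarrow> (('a \<Rightarrow> real) \<Rightarrow> 'a) \<Rightarrow> bool" where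
  "is_SPNE u1 u2 s1 s2 \<longleftrightarrow>
     s1 \<in> price_vectors \<and>
     (\<forall>p\<in>price_vectors. \<forall>b. g2 u2 p (s2 p) \<ge> g2 u2 p b) \<and>
     (\<forall>p\<in>price_vectors. g1 u1 s1 (s2 s1) \<ge> g1 u1 p (s2 p))"

definition efficient :: "('a \<Rightarrow> real) \<Rightarrow> ('a \<Rightarrow> real) \<Rightarrow> 'a \<Rightarrow> bool" where
  "efficient u1 u2 a \<longleftrightarrow> (\<forall>b. u1 b + u2 b \<le> u1 a + u2 a)"

end

theory Submission
  imports Defs
begin

text \<open>Whatever the prices, the payments sum to zero, so player 2's payoffs average to the mean
  of u2 and a best response gives player 2 at least that mean; as g1 + g2 is the welfare
  u1 + u2, player 1 earns at most the welfare of the outcome minus the mean of u2. Conversely,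
  player 1 can tilt the prices that make player 2 indifferent so that any chosen option
  becomes the unique best response, earning its welfare minus the mean up to an arbitrarily
  small loss. Hence an equilibrium outcome must be efficient, and the indifference prices
  together with the efficient option form an equilibrium.\<close>

definition mean :: "('a::finite \<Rightarrow> real) \<Rightarrow> real" where
  "mean f = (\<Sum>x\<in>UNIV. f x) / card (UNIV :: 'a set)"

lemma exists_ge_mean:
  fixes f :: "'a::finite \<Rightarrow> real"
  shows "\<exists>c. mean f \<le> f c"
proof (rule ccontr)
  assume "\<not> ?thesis"
  then have "\<And>c. f c < mean f" by (meson not_le)
  then have "(\<Sum>x\<in>UNIV. f x) < (\<Sum>x\<in>(UNIV::'a set). mean f)"
    by (intro sum_strict_mono) auto
  also have "\<dots> = (\<Sum>x\<in>UNIV. f x)" by (simp add: mean_def)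
  finally show False by simp
qed

lemma exists_maximizer:
  fixes f :: "'a::finite \<Rightarrow> real"
  shows "\<exists>c. \<forall>b. f b \<le> f c"
proof -
  obtain c where "f c = Max (range f)"
    by (metis Max_in finite_UNIV finite_imageI imageE image_is_empty UNIV_not_empty)
  then show ?thesis by (metis Max_ge finite_UNIV finite_imageI rangeI)
qed

lemma mean_g2:
  assumes "p \<in> price_vectors"
  shows "mean (g2 u2 p) = mean u2"
  using assms by (simp add: mean_def g2_def price_vectors_def sum_subtractf)

lemma g1_plus_g2: "g1 u1 p a + g2 u2 p a = u1 a + u2 a"
  by (simp add: g1_def g2_def)

lemma best_response_g1_le:
  assumes "p \<in> price_vectors" and "\<forall>b. g2 u2 p b \<le> g2 u2 p a"
  shows "g1 u1 p a \<le> u1 a + u2 a - mean u2"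
proof -
  obtain c where "mean (g2 u2 p) \<le> g2 u2 p c" using exists_ge_mean by blast
  with assms have "mean u2 \<le> g2 u2 p a" by (metis mean_g2 order_trans)
  then show ?thesis using g1_plus_g2[of u1 p a u2] by linarith
qed

text \<open>With \<open>\<epsilon> = 0\<close> these prices leave player 2 indifferent among all options;
  \<open>\<epsilon> > 0\<close> makes b strictly best at a cost of \<open>\<epsilon> (1 - 1 / n)\<close> to player 1,
  n being the number of options.\<close>

definition tilted_price :: "('a::finite \<Rightarrow> real) \<Rightarrow> 'a \<Rightarrow> real \<Rightarrow> 'a \<Rightarrow> real" where
  "tilted_price u2 b \<epsilon> x =
     u2 x - mean u2 + \<epsilon> * (1 / card (UNIV :: 'a set) - (if x = b then 1 else 0))"

lemma tilted_price_in_price_vectors: "tilted_price u2 b \<epsilon> \<in> price_vectors"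
proof -
  let ?n = "real (card (UNIV :: 'a set))"
  have "(\<Sum>x\<in>UNIV. tilted_price u2 b \<epsilon> x)
      = (\<Sum>x\<in>UNIV. u2 x) - ?n * mean u2 + \<epsilon> * (?n * (1 / ?n) - 1)"
    by (simp add: tilted_price_def sum.distrib sum_subtractf sum_distrib_left[symmetric])
  also have "\<dots> = 0" by (simp add: mean_def)
  finally show ?thesis by (simp add: price_vectors_def)
qed

lemma g2_tilted_price:
  fixes b :: "'a::finite"
  shows "g2 u2 (tilted_price u2 b \<epsilon>) x =
           mean u2 - \<epsilon> / card (UNIV :: 'a set) + (if x = b then \<epsilon> else 0)"
  by (simp add: g2_def tilted_price_def algebra_simps)

lemma g1_tilted_price:
  fixes b :: "'a::finite"
  shows "g1 u1 (tilted_price u2 b \<epsilon>) b =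
           u1 b + u2 b - mean u2 - \<epsilon> * (1 - 1 / card (UNIV :: 'a set))"
  by (simp add: g1_def tilted_price_def algebra_simps)

lemma tilted_price_unique_best_response:
  assumes "0 < \<epsilon>" and "\<forall>c. g2 u2 (tilted_price u2 b \<epsilon>) c \<le> g2 u2 (tilted_price u2 b \<epsilon>) a"
  shows "a = b"
  using assms spec[OF assms(2), of b] by (auto simp: g2_tilted_price split: if_splits)

lemma is_SPNE_g1_ge_tilted:
  fixes u1 u2 :: "'a::finite \<Rightarrow> real"
  assumes "is_SPNE u1 u2 s1 s2" and "0 < \<epsilon>"
  shows "u1 b + u2 b - mean u2 - \<epsilon> \<le> g1 u1 s1 (s2 s1)"
proof -
  let ?p = "tilted_price u2 b \<epsilon>"
  have "\<forall>c. g2 u2 ?p c \<le> g2 u2 ?p (s2 ?p)"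
    using assms(1) tilted_price_in_price_vectors unfolding is_SPNE_def by blast
  then have "s2 ?p = b"
    using assms(2) by (rule tilted_price_unique_best_response[rotated])
  moreover have "g1 u1 ?p (s2 ?p) \<le> g1 u1 s1 (s2 s1)"
    using assms(1) tilted_price_in_price_vectors unfolding is_SPNE_def by blast
  moreover have "\<epsilon> * (1 - 1 / card (UNIV :: 'a set)) \<le> \<epsilon>"
    using assms(2) by (simp add: right_diff_distrib)
  ultimately show ?thesis using g1_tilted_price[of u1 u2 b \<epsilon>] by simp
qed

lemma is_SPNE_outcome_efficient:
  assumes "is_SPNE u1 u2 s1 s2"
  shows "efficient u1 u2 (s2 s1)"
  unfolding efficient_def
proof
  fix b
  have "g1 u1 s1 (s2 s1) \<le> u1 (s2 s1) + u2 (s2 s1) - mean u2"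
    using assms by (intro best_response_g1_le) (auto simp: is_SPNE_def)
  then have "u1 b + u2 b \<le> u1 (s2 s1) + u2 (s2 s1) + \<epsilon>" if "0 < \<epsilon>" for \<epsilon>
    using is_SPNE_g1_ge_tilted[OF assms that, of b] by linarith
  then show "u1 b + u2 b \<le> u1 (s2 s1) + u2 (s2 s1)"
    by (rule field_le_epsilon)
qed

lemma efficient_is_SPNE_outcome:
  assumes "efficient u1 u2 a"
  shows "\<exists>s1 s2. is_SPNE u1 u2 s1 s2 \<and> s2 s1 = a"
proof -
  define s1 where "s1 = tilted_price u2 a 0"
  define s2 where "s2 p = (if p = s1 then a else (SOME c. \<forall>b. g2 u2 p b \<le> g2 u2 p c))" for p
  have best_response: "\<forall>b. g2 u2 p b \<le> g2 u2 p (s2 p)" for p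
  proof (cases "p = s1")
    case True
    then show ?thesis by (simp add: s2_def s1_def g2_tilted_price)
  next
    case False
    then show ?thesis using someI_ex[OF exists_maximizer[of "g2 u2 p"]] by (simp add: s2_def)
  qed
  have s2_s1: "s2 s1 = a" by (simp add: s2_def)
  have player1_optimal: "g1 u1 p (s2 p) \<le> g1 u1 s1 (s2 s1)" if "p \<in> price_vectors" for p
  proof -
    have "g1 u1 p (s2 p) \<le> u1 (s2 p) + u2 (s2 p) - mean u2"
      using that best_response by (rule best_response_g1_le)
    also have "\<dots> \<le> u1 a + u2 a - mean u2"
      using assms by (simp add: efficient_def)
    also have "\<dots> = g1 u1 s1 (s2 s1)"
      unfolding s2_s1 using g1_tilted_price[of u1 u2 a 0] by (simp add: s1_def)
    finally show ?thesis .
  qed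
  have "s1 \<in> price_vectors" unfolding s1_def by (rule tilted_price_in_price_vectors)
  then have "is_SPNE u1 u2 s1 s2"
    unfolding is_SPNE_def using best_response player1_optimal by blast
  with s2_s1 show ?thesis by blast
qed

theorem proposition1:
  fixes u1 u2 :: "'a::finite \<Rightarrow> real"
  shows "(\<forall>s1 s2. is_SPNE u1 u2 s1 s2 \<longrightarrow> efficient u1 u2 (s2 s1))
       \<and> (\<forall>a. efficient u1 u2 a \<longrightarrow> (\<exists>s1 s2. is_SPNE u1 u2 s1 s2 \<and> s2 s1 = a))"
  by (blast intro: is_SPNE_outcome_efficient efficient_is_SPNE_outcome)

end
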